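(* Let $\Delta_{\mathrm{MSE}}(\epsilon,B)$ be a real function of noise strength $\epsilon>0$ and shot budget $B>0$, and suppose that in a neighborhood of $\epsilon=0$ \[ \Delta_{\mathrm{MSE}}(\epsilon,B)=D_p\epsilon^{2p}-\frac{K_q\epsilon^q}{B}+R_p(\epsilon,B), \] with $D_p>0$, $K_q>0$, $p\ge1$, $q\ge0$, where the remainder satisfies $R_p(\epsilon,B)=O(\epsilon^{2p+\delta_b})+O(\epsilon^{q+\delta_v}/B)$ for some $\delta_b,\delta_v>0$ (uniformly in $B$), and, in case (i) below, with $r=1/(2p-q)$, the rescaled remainder $\eta_B(x)=B^{2pr}R_p(xB^{-r},B)$ and its $x$-derivative converge to $0$ uniformly on compact subsets of $(0,\infty)$ as $B\to\infty$. (i) If $0\le q<2p$, let $C_{p,q}=(K_q/D_p)^{1/(2p-q)}$. Then for any fixed $0<m<C_{p,q}<M<\infty$ and all sufficiently large $B$ there is a unique sign-changing local crossing $\epsilon^*_{\mathrm{loc}}(B)$ of $\Delta_{\mathrm{MSE}}(\cdot,B)$ in the window $\{xB^{-1/(2p-q)}:x\in[m,M]\}$, and \[ \frac{\epsilon^*_{\mathrm{loc}}(B)}{C_{p,q}B^{-1/(2p-q)}}\to1\qquad(B\to\infty). \] Moreover, for $\epsilon=xB^{-1/(2p-q)}$ with $x$ ranging in any compact subset of $(0,\infty)$ not containing $C_{p,q}$, for all sufficiently large $B$ one has $\Delta_{\mathrm{MSE}}(\epsilon,B)<0$ when $x<C_{p,q}$ and $\Delta_{\mathrm{MSE}}(\epsilon,B)>0$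 when $x>C_{p,q}$. If the convergence of $\eta_B$ and $\eta_B'$ holds at rate $O(B^{-\eta})$, then \[ \epsilon^*_{\mathrm{loc}}(B)=C_{p,q}B^{-1/(2p-q)}\left[1+O(B^{-\eta})\right]. \] (ii) If $q=2p$, then $\Delta_{\mathrm{MSE}}(\epsilon,B)=(D_p-K_q/B)\epsilon^{2p}+o(\epsilon^{2p})$, so no lower boundary $\epsilon^*(B)\to0$ arises from the leading balance; with $B^*=K_q/D_p$, for $B>B^*$ one has $\Delta_{\mathrm{MSE}}(\epsilon,B)>0$ for all sufficiently small $\epsilon>0$, and for $B<B^*$ one has $\Delta_{\mathrm{MSE}}(\epsilon,B)<0$ for all sufficiently small $\epsilon>0$ (the case $B=B^*$ being decided by higher-order terms). (iii) If $q>2p$, then for each sufficiently large fixed $B$, $\Delta_{\mathrm{MSE}}(\epsilon,B)>0$ for all sufficiently small $\epsilon>0$ (unless higher-order terms outside the displayed leading balance change the sign); in particular no leading-order shrinking lower boundary arises.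
   Context: In the application, $\Delta_{\mathrm{MSE}}(\epsilon,B)=\mathrm{MSE}_{\mathrm{noisy}}(\epsilon,B)-\mathrm{MSE}_{\mathrm{ZNE}}(\epsilon,B)$, the difference of mean-squared errors $\mathbb E[(\widehat\mu-\mu_0)^2]$ (about the ideal value $\mu_0$) of an unmitigated estimator and a zero-noise-extrapolation estimator, each using total shot budget $B$ at physical noise strength $\epsilon$; $\Delta_{\mathrm{MSE}}>0$ means ZNE helps. $D_p\epsilon^{2p}$ is the leading squared-bias improvement and $K_q\epsilon^q/B$ the leading excess-variance penalty. A "sign-changing local crossing" is a zero of $\Delta_{\mathrm{MSE}}(\cdot,B)$ across which it changes sign. *)

theory Defs
  imports Complex_Main "HOL-Library.Landau_Symbols"
begin

definition sign_changing_crossing :: "(real \<Rightarrow> real) \<Rightarrow> real \<Rightarrow> bool" where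
  "sign_changing_crossing f z \<longleftrightarrow> f z = 0 \<and>
     (\<exists>\<delta>>0. ((\<forall>t. z - \<delta> < t \<and> t < z \<longrightarrow> f t < 0) \<and> (\<forall>t. z < t \<and> t < z + \<delta> \<longrightarrow> f t > 0))
          \<or> ((\<forall>t. z - \<delta> < t \<and> t < z \<longrightarrow> f t > 0) \<and> (\<forall>t. z < t \<and> t < z + \<delta> \<longrightarrow> f t < 0)))"

definition rescaled_rem :: "(real \<Rightarrow> real \<Rightarrow> real) \<Rightarrow> real \<Rightarrow> real \<Rightarrow> real \<Rightarrow> real \<Rightarrow> real" where
  "rescaled_rem R p q B x = B powr (2 * p / (2 * p - q)) * R (x * B powr (- 1 / (2 * p - q))) B"

end

theory Submission
  imports Defs "HOL-Analysis.Analysis"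
begin

text \<open>
  Substituting \<open>\<epsilon> = x B\<^sup>-\<^sup>r\<close> with \<open>r = 1/(2p - q)\<close> turns \<open>Delta(\<cdot>, B)\<close> into
  \<open>B\<^sup>-\<^sup>2\<^sup>p\<^sup>r (g x + \<eta>\<^sub>B x)\<close>, where \<open>g x = D x\<^sup>2\<^sup>p - K x\<^sup>q\<close> is negative on \<open>(0, C)\<close>, positive
  beyond \<open>C = (K/D)\<^sup>r\<close> and has a simple root there, and \<open>\<eta>\<^sub>B\<close> is the rescaled remainder.
  As \<open>\<eta>\<^sub>B\<close> and its derivative tend to 0 uniformly on compacts, for large \<open>B\<close> the perturbed
  profile \<open>g + \<eta>\<^sub>B\<close> has the sign of \<open>g\<close> away from \<open>C\<close> and is strictly increasing near \<open>C\<close>.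
  So it has exactly one zero \<open>z\<^sub>B\<close> in any \<open>[m, M]\<close> around \<open>C\<close>, where it changes sign;
  \<open>z\<^sub>B \<longrightarrow> C\<close>, and by the mean value theorem \<open>|z\<^sub>B - C|\<close> is at most a constant times
  \<open>|\<eta>\<^sub>B(z\<^sub>B)|\<close>. Scaling back, \<open>z\<^sub>B B\<^sup>-\<^sup>r\<close> is the local crossing.
  For \<open>q \<ge> 2p\<close> and fixed \<open>B\<close> the remainder is \<open>o(\<epsilon>\<^sup>2\<^sup>p)\<close>, so near \<open>\<epsilon> = 0\<close> the sign of
  \<open>Delta(\<cdot>, B)\<close> is that of the coefficient of \<open>\<epsilon>\<^sup>2\<^sup>p\<close>: \<open>D - K/B\<close> if \<open>q = 2p\<close>, and \<open>D\<close> if \<open>q > 2p\<close>.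
\<close>

lemma powr_smallo_powr_at_right_0:
  fixes s t :: real
  assumes "s < t"
  shows "(\<lambda>\<epsilon>. \<epsilon> powr t) \<in> o[at_right 0](\<lambda>\<epsilon>. \<epsilon> powr s)"
proof (rule smalloI_tendsto)
  have "((\<lambda>\<epsilon>::real. \<epsilon> powr (t - s)) \<longlongrightarrow> 0) (at_right 0)"
    using assms
    by (intro tendsto_zero_powrI tendsto_ident_at tendsto_const) (auto intro: eventually_at_rightI[of 0 1])
  moreover have "\<forall>\<^sub>F \<epsilon> in at_right 0. \<epsilon> powr (t - s) = \<epsilon> powr t / \<epsilon> powr s"
    by (rule eventually_at_rightI[of 0 1]) (simp_all add: powr_diff)
  ultimately show "((\<lambda>\<epsilon>::real. \<epsilon> powr t / \<epsilon> powr s) \<longlongrightarrow> 0) (at_right 0)"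
    using tendsto_cong by fastforce
  show "\<forall>\<^sub>F \<epsilon> in at_right 0. (\<epsilon>::real) powr s \<noteq> 0"
    by (rule eventually_at_rightI[of 0 1]) simp_all
qed

lemma strict_mono_on_root_imp_sign_changing_crossing:
  assumes "strict_mono_on {a..b} f" "a < z" "z < b" "f z = 0"
  shows "sign_changing_crossing f z"
proof -
  define \<delta> where "\<delta> = min (z - a) (b - z)"
  have "f t < 0" if "z - \<delta> < t" "t < z" for t
    using strict_mono_onD[OF assms(1), of t z] that assms by (auto simp: \<delta>_def)
  moreover have "f t > 0" if "z < t" "t < z + \<delta>" for t
    using strict_mono_onD[OF assms(1), of z t] that assms by (auto simp: \<delta>_def)
  moreover have "\<delta> > 0"
    using assms by (simp add: \<delta>_def)
  ultimately show ?thesis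
    unfolding sign_changing_crossing_def using assms(4) by blast
qed

lemma sign_changing_crossing_rescale:
  fixes f h :: "real \<Rightarrow> real"
  assumes cross: "sign_changing_crossing h z" and "0 < z" "0 < c" "0 < s" "z * s < e"
    and agree: "\<And>t. 0 < t \<Longrightarrow> t < e \<Longrightarrow> f t = c * h (t / s)"
  shows "sign_changing_crossing f (z * s)"
proof -
  obtain \<delta> where "\<delta> > 0" and sides:
    "((\<forall>t. z - \<delta> < t \<and> t < z \<longrightarrow> h t < 0) \<and> (\<forall>t. z < t \<and> t < z + \<delta> \<longrightarrow> h t > 0))
     \<or> ((\<forall>t. z - \<delta> < t \<and> t < z \<longrightarrow> h t > 0) \<and> (\<forall>t. z < t \<and> t < z + \<delta> \<longrightarrow> h t < 0))"
    using cross unfolding sign_changing_crossing_def by blast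
  define \<delta>' where "\<delta>' = min (\<delta> * s) (min (z * s) (e - z * s))"
  have "\<delta>' > 0"
    using \<open>\<delta> > 0\<close> assms by (simp add: \<delta>'_def)
  have left: "z - \<delta> < t / s \<and> t / s < z \<and> (f t < 0 \<longleftrightarrow> h (t / s) < 0) \<and> (0 < f t \<longleftrightarrow> 0 < h (t / s))"
    if "z * s - \<delta>' < t" "t < z * s" for t
  proof -
    have "0 < t" "t < e" "z * s - \<delta> * s < t"
      using that assms(5) by (auto simp: \<delta>'_def)
    then show ?thesis
      using that assms by (auto simp: agree zero_less_mult_iff mult_less_0_iff field_simps)
  qed
  have right: "z < t / s \<and> t / s < z + \<delta> \<and> (f t < 0 \<longleftrightarrow> h (t / s) < 0) \<and> (0 < f t \<longleftrightarrow> 0 < h (t / s))"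
    if "z * s < t" "t < z * s + \<delta>'" for t
  proof -
    have "0 < t" "t < e" "t < z * s + \<delta> * s"
      using that assms(2,4) by (auto simp: \<delta>'_def)
    then show ?thesis
      using that assms by (auto simp: agree zero_less_mult_iff mult_less_0_iff field_simps)
  qed
  have "f (z * s) = 0"
    using cross assms by (simp add: agree sign_changing_crossing_def)
  moreover from sides
  have "((\<forall>t. z * s - \<delta>' < t \<and> t < z * s \<longrightarrow> f t < 0) \<and> (\<forall>t. z * s < t \<and> t < z * s + \<delta>' \<longrightarrow> f t > 0))
     \<or> ((\<forall>t. z * s - \<delta>' < t \<and> t < z * s \<longrightarrow> f t > 0) \<and> (\<forall>t. z * s < t \<and> t < z * s + \<delta>' \<longrightarrow> f t < 0))"
  proof (elim disjE conjE)
    assume "\<forall>t. z - \<delta> < t \<and> t < z \<longrightarrow> h t < 0" "\<forall>t. z < t \<and> t < z + \<delta> \<longrightarrow> 0 < h t"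
    then show ?thesis
      using left right by (intro disjI1 conjI allI impI) auto
  next
    assume "\<forall>t. z - \<delta> < t \<and> t < z \<longrightarrow> 0 < h t" "\<forall>t. z < t \<and> t < z + \<delta> \<longrightarrow> h t < 0"
    then show ?thesis
      using left right by (intro disjI2 conjI allI impI) auto
  qed
  ultimately show ?thesis
    unfolding sign_changing_crossing_def using \<open>\<delta>' > 0\<close> by blast
qed

lemma eventually_sgn_eq_of_smallo:
  fixes f g :: "'a \<Rightarrow> real"
  assumes "(\<lambda>x. f x - L * g x) \<in> o[F](g)" "L \<noteq> 0" "\<forall>\<^sub>F x in F. 0 < g x"
  shows "\<forall>\<^sub>F x in F. sgn (f x) = sgn L"
proof -
  have "(\<lambda>x. f x - L * g x) \<in> o[F](\<lambda>x. L * g x)"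
    using assms(1,2) by simp
  then have "f \<sim>[F] (\<lambda>x. L * g x)"
    by (rule smallo_imp_asymp_equiv)
  from asymp_equiv_eventually_same_sign[OF this] assms(3) show ?thesis
    by eventually_elim (simp add: sgn_mult)
qed

lemma eventually_pos_powr_at_right_0: "\<forall>\<^sub>F \<epsilon> in at_right 0. 0 < (\<epsilon>::real) powr a"
  by (rule eventually_at_rightI[of 0 1]) simp_all

locale perturbed_simple_root =
  fixes g g' :: "real \<Rightarrow> real" and C :: real
    and \<eta> \<eta>' :: "'b \<Rightarrow> real \<Rightarrow> real" and F :: "'b filter"
  assumes C_pos: "0 < C"
    and g_root: "g C = 0"
    and g_neg: "\<And>x. 0 < x \<Longrightarrow> x < C \<Longrightarrow> g x < 0"
    and g_pos: "\<And>x. C < x \<Longrightarrow> 0 < g x"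
    and g_deriv: "\<And>x. 0 < x \<Longrightarrow> (g has_real_derivative g' x) (at x)"
    and g'_cont: "isCont g' C"
    and g'_root_pos: "0 < g' C"
    and perturbation_small: "\<And>S e. compact S \<Longrightarrow> S \<subseteq> {0<..} \<Longrightarrow> 0 < e \<Longrightarrow>
      \<forall>\<^sub>F B in F. \<forall>x\<in>S. (\<eta> B has_real_derivative \<eta>' B x) (at x) \<and> \<bar>\<eta> B x\<bar> < e \<and> \<bar>\<eta>' B x\<bar> < e"
begin

text \<open>Any compact window around \<open>C\<close> would do. Only for large \<open>B\<close> is the predicate
  known to be satisfiable, so \<open>root B\<close> may be junk for small \<open>B\<close>.\<close>

definition root :: "'b \<Rightarrow> real" where
  "root B = (SOME x. x \<in> {C/2..2*C} \<and> g x + \<eta> B x = 0)"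

lemma slope_near_root:
  obtains a \<gamma> where "0 < a" "a \<le> C/2" "0 < \<gamma>" "\<And>x. x \<in> {C-a..C+a} \<Longrightarrow> \<gamma> < g' x"
proof -
  have "(g' \<longlongrightarrow> g' C) (nhds C)"
    using g'_cont by (simp add: isCont_def tendsto_at_iff_tendsto_nhds)
  then have "\<forall>\<^sub>F x in nhds C. g' C / 2 < g' x"
    using g'_root_pos by (intro order_tendstoD(1)) auto
  then obtain d where "0 < d" and d: "\<And>x. dist x C < d \<Longrightarrow> g' C / 2 < g' x"
    unfolding eventually_nhds_metric by blast
  show ?thesis
  proof
    show "0 < min (d/2) (C/2)" "min (d/2) (C/2) \<le> C/2" "0 < g' C / 2"
      using \<open>0 < d\<close> C_pos g'_root_pos by auto
    show "g' C / 2 < g' x" if "x \<in> {C - min (d/2) (C/2)..C + min (d/2) (C/2)}" for x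
      using that \<open>0 < d\<close> by (intro d) (auto simp: dist_real_def)
  qed
qed

lemma profile_dominates_distance:
  assumes "a < C" "\<And>x. x \<in> {C-a..C+a} \<Longrightarrow> \<gamma> < g' x" "x \<in> {C-a..C+a}"
  shows "\<gamma> * \<bar>x - C\<bar> \<le> \<bar>g x\<bar>"
proof -
  have deriv: "(g has_real_derivative g' y) (at y)" if "y \<in> {C-a..C+a}" for y
    using that assms(1) by (intro g_deriv) auto
  consider "x = C" | "x < C" | "C < x" by linarith
  then show ?thesis
  proof cases
    case 1
    then show ?thesis by (simp add: g_root)
  next
    case 2
    then obtain \<xi> where "x < \<xi>" "\<xi> < C" "g C - g x = (C - x) * g' \<xi>"
      using MVT2[of x C g g'] deriv assms(3) by auto
    moreover have "\<gamma> < g' \<xi>"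
      using assms(2,3) \<open>x < \<xi>\<close> \<open>\<xi> < C\<close> by auto
    moreover have "\<gamma> * (C - x) \<le> g' \<xi> * (C - x)"
      using 2 \<open>\<gamma> < g' \<xi>\<close> by (intro mult_right_mono) auto
    ultimately show ?thesis
      using 2 by (simp add: g_root algebra_simps)
  next
    case 3
    then obtain \<xi> where "C < \<xi>" "\<xi> < x" "g x - g C = (x - C) * g' \<xi>"
      using MVT2[of C x g g'] deriv assms(3) by auto
    moreover have "\<gamma> < g' \<xi>"
      using assms(2,3) \<open>C < \<xi>\<close> \<open>\<xi> < x\<close> by auto
    moreover have "\<gamma> * (x - C) \<le> g' \<xi> * (x - C)"
      using 3 \<open>\<gamma> < g' \<xi>\<close> by (intro mult_right_mono) auto
    ultimately show ?thesis
      using 3 by (simp add: g_root algebra_simps)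
  qed
qed

lemma profile_bounded_away:
  assumes "compact S" "S \<subseteq> {0<..}" "C \<notin> S"
  obtains \<beta> where "0 < \<beta>" "\<And>x. x \<in> S \<Longrightarrow> \<beta> \<le> \<bar>g x\<bar>"
proof (cases "S = {}")
  case False
  have "continuous_on S (\<lambda>x. \<bar>g x\<bar>)"
    using assms(2) g_deriv
    by (intro continuous_on_rabs continuous_at_imp_continuous_on) (auto intro: DERIV_isCont)
  then obtain x0 where "x0 \<in> S" and x0: "\<And>x. x \<in> S \<Longrightarrow> \<bar>g x0\<bar> \<le> \<bar>g x\<bar>"
    using continuous_attains_inf[OF assms(1) False] by blast
  moreover have "0 < x0" "x0 \<noteq> C"
    using \<open>x0 \<in> S\<close> assms(2,3) by auto
  then have "g x0 \<noteq> 0"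
    using g_neg[of x0] g_pos[of x0] by (cases "x0 < C") auto
  ultimately show ?thesis
    using that[of "\<bar>g x0\<bar>"] by auto
qed (use that[of 1] in auto)

lemma eventually_perturbed_sign:
  assumes "compact S" "S \<subseteq> {0<..}" "C \<notin> S"
  shows "\<forall>\<^sub>F B in F. \<forall>x\<in>S. (x < C \<longrightarrow> g x + \<eta> B x < 0) \<and> (C < x \<longrightarrow> 0 < g x + \<eta> B x)"
proof -
  obtain \<beta> where "0 < \<beta>" and \<beta>: "\<And>x. x \<in> S \<Longrightarrow> \<beta> \<le> \<bar>g x\<bar>"
    by (rule profile_bounded_away[OF assms]) blast
  show ?thesis
    using perturbation_small[OF assms(1,2) \<open>0 < \<beta>\<close>]
  proof eventually_elim
    case (elim B)
    show ?case
    proof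
      fix x assume "x \<in> S"
      then have "\<bar>\<eta> B x\<bar> < \<beta>" "\<beta> \<le> \<bar>g x\<bar>" "0 < x"
        using elim \<beta> assms(2) by auto
      then have "\<bar>\<eta> B x\<bar> < \<bar>g x\<bar>"
        by linarith
      then show "(x < C \<longrightarrow> g x + \<eta> B x < 0) \<and> (C < x \<longrightarrow> 0 < g x + \<eta> B x)"
        using g_neg[of x] g_pos[of x] \<open>0 < x\<close> by (auto simp: abs_less_iff abs_of_neg abs_of_pos)
    qed
  qed
qed

lemma eventually_perturbed_zeros_near_root:
  assumes "0 < m" "0 < \<rho>"
  shows "\<forall>\<^sub>F B in F. \<forall>x\<in>{m..M}. g x + \<eta> B x = 0 \<longrightarrow> \<bar>x - C\<bar> < \<rho>"
proof -
  have "compact ({m..C-\<rho>} \<union> {C+\<rho>..M})" "{m..C-\<rho>} \<union> {C+\<rho>..M} \<subseteq> {0<..}"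
    "C \<notin> {m..C-\<rho>} \<union> {C+\<rho>..M}"
    using assms C_pos by auto
  from eventually_perturbed_sign[OF this] show ?thesis
  proof eventually_elim
    case (elim B)
    show ?case
    proof (intro ballI impI)
      fix x assume "x \<in> {m..M}" "g x + \<eta> B x = 0"
      show "\<bar>x - C\<bar> < \<rho>"
      proof (rule ccontr)
        assume "\<not> \<bar>x - C\<bar> < \<rho>"
        then have "x \<in> {m..C-\<rho>} \<union> {C+\<rho>..M}" "x \<noteq> C"
          using \<open>x \<in> {m..M}\<close> \<open>0 < \<rho>\<close> by auto
        then have "(x < C \<longrightarrow> g x + \<eta> B x < 0) \<and> (C < x \<longrightarrow> 0 < g x + \<eta> B x)"
          using elim by blast
        then show False
          using \<open>g x + \<eta> B x = 0\<close> \<open>x \<noteq> C\<close> by (cases "x < C") auto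
      qed
    qed
  qed
qed

lemma eventually_perturbed_strict_mono:
  assumes "0 < u" "0 < \<gamma>" "\<And>x. x \<in> {u..v} \<Longrightarrow> \<gamma> < g' x"
  shows "\<forall>\<^sub>F B in F. strict_mono_on {u..v} (\<lambda>x. g x + \<eta> B x)"
proof -
  have "compact {u..v}" "{u..v} \<subseteq> {0<..}"
    using assms(1) by auto
  from perturbation_small[OF this assms(2)] show ?thesis
  proof eventually_elim
    case (elim B)
    have deriv_pos: "\<exists>d. ((\<lambda>x. g x + \<eta> B x) has_real_derivative d) (at y) \<and> 0 < d"
      if "y \<in> {u..v}" for y
    proof -
      have "(\<eta> B has_real_derivative \<eta>' B y) (at y)" "\<bar>\<eta>' B y\<bar> < \<gamma>"
        using elim that by auto
      moreover have "(g has_real_derivative g' y) (at y)"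
        using g_deriv that \<open>0 < u\<close> by auto
      ultimately show ?thesis
        using assms(3)[OF that] by (intro exI[of _ "g' y + \<eta>' B y"]) (auto intro: DERIV_add)
    qed
    show ?case
    proof (rule strict_mono_onI)
      fix r t assume "r \<in> {u..v}" "t \<in> {u..v}" "r < t"
      then show "g r + \<eta> B r < g t + \<eta> B t"
        using DERIV_pos_imp_increasing[of r t "\<lambda>x. g x + \<eta> B x"] deriv_pos by auto
    qed
  qed
qed

lemma eventually_strict_mono_near_root:
  obtains a where "0 < a" "\<forall>\<^sub>F B in F. strict_mono_on {C-a..C+a} (\<lambda>x. g x + \<eta> B x)"
proof -
  obtain a \<gamma> where "0 < a" "a \<le> C/2" "0 < \<gamma>" and slope: "\<And>x. x \<in> {C-a..C+a} \<Longrightarrow> \<gamma> < g' x"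
    by (rule slope_near_root) blast
  have "0 < C - a"
    using \<open>a \<le> C/2\<close> C_pos by linarith
  then have "\<forall>\<^sub>F B in F. strict_mono_on {C-a..C+a} (\<lambda>x. g x + \<eta> B x)"
    using \<open>0 < \<gamma>\<close> slope by (rule eventually_perturbed_strict_mono)
  with \<open>0 < a\<close> show ?thesis
    by (rule that)
qed

lemma eventually_root_near:
  assumes "0 < \<rho>"
  shows "\<forall>\<^sub>F B in F. \<bar>root B - C\<bar> < \<rho> \<and> g (root B) + \<eta> B (root B) = 0"
proof -
  have ends: "compact {C/2, 2*C}" "{C/2, 2*C} \<subseteq> {0<..}" "C \<notin> {C/2, 2*C}"
    using C_pos by auto
  have window: "compact {C/2..2*C}" "{C/2..2*C} \<subseteq> {0<..}"
    using C_pos by auto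
  show ?thesis
    using eventually_perturbed_sign[OF ends] perturbation_small[OF window zero_less_one]
      eventually_perturbed_zeros_near_root[OF half_gt_zero[OF C_pos] assms, of "2*C"]
  proof eventually_elim
    case (elim B)
    have "isCont (\<lambda>x. g x + \<eta> B x) x" if "x \<in> {C/2..2*C}" for x
    proof -
      have "(g has_real_derivative g' x) (at x)" "(\<eta> B has_real_derivative \<eta>' B x) (at x)"
        using that elim(2) window(2) g_deriv by auto
      then show ?thesis
        using isCont_add[OF DERIV_isCont DERIV_isCont] by blast
    qed
    then have "continuous_on {C/2..2*C} (\<lambda>x. g x + \<eta> B x)"
      by (intro continuous_at_imp_continuous_on) blast
    moreover have "g (C/2) + \<eta> B (C/2) < 0" "0 < g (2*C) + \<eta> B (2*C)"
      using elim(1) C_pos by auto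
    ultimately obtain x where "x \<in> {C/2..2*C}" "g x + \<eta> B x = 0"
      using IVT'[of "\<lambda>x. g x + \<eta> B x" "C/2" 0 "2*C"] C_pos by auto
    then have "root B \<in> {C/2..2*C} \<and> g (root B) + \<eta> B (root B) = 0"
      using someI[of "\<lambda>y. y \<in> {C/2..2*C} \<and> g y + \<eta> B y = 0" x] unfolding root_def by blast
    then show ?case
      using elim(3) by blast
  qed
qed

lemma root_tendsto: "(root \<longlongrightarrow> C) F"
proof (rule tendstoI)
  fix e :: real assume "0 < e"
  from eventually_root_near[OF this] show "\<forall>\<^sub>F B in F. dist (root B) C < e"
    by eventually_elim (simp add: dist_real_def)
qed

lemma eventually_root_sign_changing_crossing:
  "\<forall>\<^sub>F B in F. sign_changing_crossing (\<lambda>x. g x + \<eta> B x) (root B)"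
proof -
  obtain a where "0 < a" and mono: "\<forall>\<^sub>F B in F. strict_mono_on {C-a..C+a} (\<lambda>x. g x + \<eta> B x)"
    by (rule eventually_strict_mono_near_root) blast
  from eventually_root_near[OF \<open>0 < a\<close>] mono show ?thesis
  proof eventually_elim
    case (elim B)
    then have "C - a < root B" "root B < C + a"
      by (auto simp: abs_less_iff)
    with elim show ?case
      by (intro strict_mono_on_root_imp_sign_changing_crossing[of "C-a" "C+a"]) simp_all
  qed
qed

lemma eventually_root_unique:
  assumes "0 < m"
  shows "\<forall>\<^sub>F B in F. \<forall>x\<in>{m..M}. g x + \<eta> B x = 0 \<longrightarrow> x = root B"
proof -
  obtain a where "0 < a" and mono: "\<forall>\<^sub>F B in F. strict_mono_on {C-a..C+a} (\<lambda>x. g x + \<eta> B x)"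
    by (rule eventually_strict_mono_near_root) blast
  from eventually_root_near[OF \<open>0 < a\<close>] eventually_perturbed_zeros_near_root[OF assms \<open>0 < a\<close>, of M] mono
  show ?thesis
  proof eventually_elim
    case (elim B)
    show ?case
    proof (intro ballI impI)
      fix x assume "x \<in> {m..M}" "g x + \<eta> B x = 0"
      then have "\<bar>x - C\<bar> < a"
        using elim(2) by blast
      then show "x = root B"
        using strict_mono_on_eqD[OF elim(3), of "root B" x] elim(1) \<open>g x + \<eta> B x = 0\<close>
        by (auto simp: abs_less_iff)
    qed
  qed
qed

lemma root_deviation_bigo:
  assumes "\<forall>\<^sub>F B in F. \<forall>x\<in>{C/2..2*C}. \<bar>\<eta> B x\<bar> \<le> A * b B"
  shows "(\<lambda>B. root B - C) \<in> O[F](b)"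
proof -
  obtain a \<gamma> where "0 < a" "a \<le> C/2" "0 < \<gamma>" and slope: "\<And>x. x \<in> {C-a..C+a} \<Longrightarrow> \<gamma> < g' x"
    by (rule slope_near_root) blast
  have "a < C"
    using \<open>a \<le> C/2\<close> C_pos by linarith
  show ?thesis
  proof (rule bigoI)
    show "\<forall>\<^sub>F B in F. norm (root B - C) \<le> \<bar>A\<bar> / \<gamma> * norm (b B)"
      using assms eventually_root_near[OF \<open>0 < a\<close>]
    proof eventually_elim
      case (elim B)
      then have "root B \<in> {C-a..C+a}" "root B \<in> {C/2..2*C}"
        using \<open>a \<le> C/2\<close> C_pos by (auto simp: abs_less_iff)
      then have "\<gamma> * \<bar>root B - C\<bar> \<le> \<bar>g (root B)\<bar>"
        using profile_dominates_distance[OF \<open>a < C\<close> slope] by blast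
      also have "\<dots> = \<bar>\<eta> B (root B)\<bar>"
        using elim(2) by (simp add: eq_neg_iff_add_eq_0 [symmetric])
      also have "\<dots> \<le> A * b B"
        using elim(1) \<open>root B \<in> {C/2..2*C}\<close> by blast
      also have "\<dots> \<le> \<bar>A\<bar> * \<bar>b B\<bar>"
        by (metis abs_ge_self abs_mult)
      finally show ?case
        using \<open>0 < \<gamma>\<close> by (simp add: pos_le_divide_eq mult.commute)
    qed
  qed
qed

end

definition leading_profile :: "real \<Rightarrow> real \<Rightarrow> real \<Rightarrow> real \<Rightarrow> real \<Rightarrow> real" where
  "leading_profile D K p q x = D * x powr (2 * p) - K * x powr q"

definition crossover :: "real \<Rightarrow> real \<Rightarrow> real \<Rightarrow> real \<Rightarrow> real" where
  "crossover D K p q = (K / D) powr (1 / (2 * p - q))"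

lemma leading_profile_factor:
  "0 < x \<Longrightarrow> leading_profile D K p q x = x powr q * (D * x powr (2 * p - q) - K)"
  by (simp add: leading_profile_def algebra_simps flip: powr_add)

lemma leading_profile_has_real_derivative:
  "0 < x \<Longrightarrow> (leading_profile D K p q has_real_derivative
     2 * p * D * x powr (2 * p - 1) - q * K * x powr (q - 1)) (at x)"
  unfolding leading_profile_def by (auto intro!: derivative_eq_intros)

text \<open>Both \<open>\<epsilon>\<^sup>2\<^sup>p\<close> and \<open>\<epsilon>\<^sup>q / B\<close> scale like \<open>B powr (-2p/(2p - q))\<close>; this balance fixes
  the exponent of the rescaling.\<close>

lemma leading_balance_rescaled:
  fixes D K p q B x :: real
  assumes "q \<noteq> 2 * p" "0 < B" "0 < x"
  defines "\<epsilon> \<equiv> x * B powr (- (1 / (2 * p - q)))"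
  shows "D * \<epsilon> powr (2 * p) - K * \<epsilon> powr q / B + R \<epsilon> B
    = B powr (- (2 * p / (2 * p - q))) * (leading_profile D K p q x + rescaled_rem R p q B x)"
proof -
  define d where "d = 2 * p - q"
  have "d \<noteq> 0"
    using assms(1) by (simp add: d_def)
  have bias: "\<epsilon> powr (2 * p) = B powr (- (2 * p / d)) * x powr (2 * p)"
    using assms by (simp add: \<epsilon>_def d_def powr_mult powr_powr)
  have "K * \<epsilon> powr q / B = K * x powr q * B powr (- (q / d) - 1)"
    using assms by (simp add: \<epsilon>_def d_def powr_mult powr_powr powr_diff)
  also have "- (q / d) - 1 = - (2 * p / d)"
    using \<open>d \<noteq> 0\<close> by (simp add: d_def field_simps)
  finally have variance: "K * \<epsilon> powr q / B = B powr (- (2 * p / d)) * (K * x powr q)"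
    by simp
  have "R \<epsilon> B = B powr (- (2 * p / d)) * rescaled_rem R p q B x"
    using assms by (simp add: rescaled_rem_def \<epsilon>_def d_def powr_minus)
  with bias variance show ?thesis
    by (simp add: leading_profile_def d_def right_diff_distrib distrib_left)
qed

context
  fixes D K p q :: real
  assumes D_pos: "0 < D" and K_pos: "0 < K" and q_less: "q < 2 * p"
begin

lemma crossover_pos: "0 < crossover D K p q"
  using D_pos K_pos by (simp add: crossover_def)

lemma crossover_powr: "crossover D K p q powr (2 * p - q) = K / D"
  using D_pos K_pos q_less by (simp add: crossover_def powr_powr)

lemma leading_profile_crossover: "leading_profile D K p q (crossover D K p q) = 0"
  using crossover_pos crossover_powr D_pos by (simp add: leading_profile_factor)

lemma leading_profile_neg:
  assumes "0 < x" "x < crossover D K p q"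
  shows "leading_profile D K p q x < 0"
proof -
  have "x powr (2 * p - q) < crossover D K p q powr (2 * p - q)"
    using assms q_less by (intro powr_less_mono2) auto
  then have "x powr (2 * p - q) < K / D"
    by (simp only: crossover_powr)
  then have "D * x powr (2 * p - q) < K"
    using D_pos by (metis mult.commute pos_less_divide_eq)
  then show ?thesis
    using assms(1) by (simp add: leading_profile_factor mult_pos_neg)
qed

lemma leading_profile_pos:
  assumes "crossover D K p q < x"
  shows "0 < leading_profile D K p q x"
proof -
  have "0 < x"
    using assms crossover_pos by linarith
  have "crossover D K p q powr (2 * p - q) < x powr (2 * p - q)"
    using assms q_less crossover_pos by (intro powr_less_mono2) auto
  then have "K / D < x powr (2 * p - q)"
    by (simp only: crossover_powr)
  then have "K < D * x powr (2 * p - q)"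
    using D_pos by (metis mult.commute pos_divide_less_eq)
  then show ?thesis
    using \<open>0 < x\<close> by (simp add: leading_profile_factor)
qed

lemma leading_profile_deriv_crossover_pos:
  "0 < 2 * p * D * crossover D K p q powr (2 * p - 1) - q * K * crossover D K p q powr (q - 1)"
proof -
  let ?C = "crossover D K p q"
  have "?C powr (2 * p - 1) = ?C powr (q - 1) * ?C powr (2 * p - q)"
    by (simp flip: powr_add)
  also have "\<dots> = ?C powr (q - 1) * (K / D)"
    by (simp only: crossover_powr)
  finally have "2 * p * D * ?C powr (2 * p - 1) - q * K * ?C powr (q - 1) = ?C powr (q - 1) * K * (2 * p - q)"
    using D_pos by (simp add: field_simps)
  then show ?thesis
    using crossover_pos K_pos q_less by simp
qed

lemma perturbed_simple_root_leading_profile: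
  assumes "\<forall>S. compact S \<and> S \<subseteq> {0<..} \<longrightarrow> (\<forall>e>0. \<forall>\<^sub>F B in at_top. \<forall>x\<in>S.
      ((rescaled_rem R p q B) has_real_derivative deta B x) (at x) \<and>
      \<bar>rescaled_rem R p q B x\<bar> < e \<and> \<bar>deta B x\<bar> < e)"
  shows "perturbed_simple_root (leading_profile D K p q)
    (\<lambda>x. 2 * p * D * x powr (2 * p - 1) - q * K * x powr (q - 1)) (crossover D K p q)
    (rescaled_rem R p q) deta at_top"
proof
  show "isCont (\<lambda>x. 2 * p * D * x powr (2 * p - 1) - q * K * x powr (q - 1)) (crossover D K p q)"
    using crossover_pos by (intro continuous_intros) auto
qed (use assms crossover_pos leading_profile_crossover leading_profile_neg leading_profile_pos
      leading_profile_has_real_derivative leading_profile_deriv_crossover_pos in auto)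

end

lemma remainder_smallo:
  fixes r :: "real \<Rightarrow> real"
  assumes "2 * p \<le> q" "0 < \<delta>b" "0 < \<delta>v" "0 < \<epsilon>1"
    and bound: "\<And>\<epsilon>. 0 < \<epsilon> \<Longrightarrow> \<epsilon> < \<epsilon>1 \<Longrightarrow> \<bar>r \<epsilon>\<bar> \<le> c * (\<epsilon> powr (2 * p + \<delta>b) + \<epsilon> powr (q + \<delta>v) / B)"
  shows "r \<in> o[at_right 0](\<lambda>\<epsilon>. \<epsilon> powr (2 * p))"
proof -
  have "r \<in> O[at_right 0](\<lambda>\<epsilon>. \<epsilon> powr (2 * p + \<delta>b) + \<epsilon> powr (q + \<delta>v) / B)"
  proof (rule bigoI)
    show "\<forall>\<^sub>F \<epsilon> in at_right 0. norm (r \<epsilon>) \<le> \<bar>c\<bar> * norm (\<epsilon> powr (2 * p + \<delta>b) + \<epsilon> powr (q + \<delta>v) / B)"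
      unfolding eventually_at_right_field
    proof (intro exI[of _ \<epsilon>1] conjI allI impI)
      fix \<epsilon> :: real assume "0 < \<epsilon>" "\<epsilon> < \<epsilon>1"
      then have "\<bar>r \<epsilon>\<bar> \<le> c * (\<epsilon> powr (2 * p + \<delta>b) + \<epsilon> powr (q + \<delta>v) / B)"
        by (rule bound)
      also have "\<dots> \<le> \<bar>c\<bar> * \<bar>\<epsilon> powr (2 * p + \<delta>b) + \<epsilon> powr (q + \<delta>v) / B\<bar>"
        by (metis abs_ge_self abs_mult)
      finally show "norm (r \<epsilon>) \<le> \<bar>c\<bar> * norm (\<epsilon> powr (2 * p + \<delta>b) + \<epsilon> powr (q + \<delta>v) / B)"
        by simp
    qed (use assms(4) in simp)
  qed
  moreover have "(\<lambda>\<epsilon>. \<epsilon> powr (2 * p + \<delta>b) + \<epsilon> powr (q + \<delta>v) / B) \<in> o[at_right 0](\<lambda>\<epsilon>. \<epsilon> powr (2 * p))"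
  proof (rule sum_in_smallo)
    show "(\<lambda>\<epsilon>. \<epsilon> powr (2 * p + \<delta>b)) \<in> o[at_right 0](\<lambda>\<epsilon>. \<epsilon> powr (2 * p))"
      using assms(2) by (intro powr_smallo_powr_at_right_0) simp
    have "(\<lambda>\<epsilon>. \<epsilon> powr (q + \<delta>v)) \<in> o[at_right 0](\<lambda>\<epsilon>. \<epsilon> powr (2 * p))"
      using assms(1,3) by (intro powr_smallo_powr_at_right_0) simp
    then show "(\<lambda>\<epsilon>. \<epsilon> powr (q + \<delta>v) / B) \<in> o[at_right 0](\<lambda>\<epsilon>. \<epsilon> powr (2 * p))"
      by (cases "B = 0") simp_all
  qed
  ultimately show ?thesis
    by (rule landau_o.big_small_trans)
qed

context
  fixes Delta R deta :: "real \<Rightarrow> real \<Rightarrow> real" and D K p q e0 :: real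
  assumes D_pos: "0 < D" and K_pos: "0 < K" and q_less: "q < 2 * p" and e0_pos: "0 < e0"
    and expansion: "\<And>\<epsilon> B. 0 < \<epsilon> \<Longrightarrow> \<epsilon> < e0 \<Longrightarrow> 0 < B \<Longrightarrow>
      Delta \<epsilon> B = D * \<epsilon> powr (2 * p) - K * \<epsilon> powr q / B + R \<epsilon> B"
    and rescaled_rem_small: "\<forall>S. compact S \<and> S \<subseteq> {0<..} \<longrightarrow> (\<forall>e>0. \<forall>\<^sub>F B in at_top. \<forall>x\<in>S.
      ((rescaled_rem R p q B) has_real_derivative deta B x) (at x) \<and>
      \<bar>rescaled_rem R p q B x\<bar> < e \<and> \<bar>deta B x\<bar> < e)"
begin

interpretation rescaled: perturbed_simple_root "leading_profile D K p q"
  "\<lambda>x. 2 * p * D * x powr (2 * p - 1) - q * K * x powr (q - 1)" "crossover D K p q"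
  "rescaled_rem R p q" deta at_top
  using D_pos K_pos q_less rescaled_rem_small by (rule perturbed_simple_root_leading_profile)

lemma eventually_Delta_rescaled:
  "\<forall>\<^sub>F B in at_top. 0 < B \<and> (\<forall>x. 0 < x \<and> x \<le> M \<longrightarrow>
     Delta (x * B powr (- (1 / (2 * p - q)))) B
       = B powr (- (2 * p / (2 * p - q))) * (leading_profile D K p q x + rescaled_rem R p q B x))"
proof -
  have "((\<lambda>B. M * B powr (- (1 / (2 * p - q)))) \<longlongrightarrow> M * 0) at_top"
    using q_less by (intro tendsto_mult tendsto_const tendsto_neg_powr filterlim_ident) auto
  then have "\<forall>\<^sub>F B in at_top. M * B powr (- (1 / (2 * p - q))) < e0"
    using e0_pos by (auto dest: order_tendstoD(2))
  with eventually_gt_at_top[of 0] show ?thesis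
  proof eventually_elim
    case (elim B)
    show ?case
    proof (intro conjI allI impI)
      fix x assume x: "0 < x \<and> x \<le> M"
      have "x * B powr (- (1 / (2 * p - q))) \<le> M * B powr (- (1 / (2 * p - q)))"
        using x by (intro mult_right_mono) auto
      then have "x * B powr (- (1 / (2 * p - q))) < e0"
        using elim by linarith
      moreover have "0 < x * B powr (- (1 / (2 * p - q)))"
        using elim x by simp
      ultimately show "Delta (x * B powr (- (1 / (2 * p - q)))) B
          = B powr (- (2 * p / (2 * p - q))) * (leading_profile D K p q x + rescaled_rem R p q B x)"
        using elim x q_less by (simp add: expansion leading_balance_rescaled)
    qed (use elim in simp)
  qed
qed

lemma Delta_sign_rescaled:
  assumes "compact S" "S \<subseteq> {0<..}" "crossover D K p q \<notin> S"
  shows "\<forall>\<^sub>F B in at_top. \<forall>x\<in>S.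
    (x < crossover D K p q \<longrightarrow> Delta (x * B powr (- (1 / (2 * p - q)))) B < 0) \<and>
    (crossover D K p q < x \<longrightarrow> 0 < Delta (x * B powr (- (1 / (2 * p - q)))) B)"
proof -
  obtain M where M: "\<And>x. x \<in> S \<Longrightarrow> \<bar>x\<bar> \<le> M"
    using compact_imp_bounded[OF assms(1)] unfolding bounded_real by blast
  from eventually_Delta_rescaled[of M] rescaled.eventually_perturbed_sign[OF assms]
  show ?thesis
  proof eventually_elim
    case (elim B)
    show ?case
    proof
      fix x assume "x \<in> S"
      then have "0 < x" "x \<le> M"
        using assms(2) M[of x] by auto
      then show "(x < crossover D K p q \<longrightarrow> Delta (x * B powr (- (1 / (2 * p - q)))) B < 0) \<and>
          (crossover D K p q < x \<longrightarrow> 0 < Delta (x * B powr (- (1 / (2 * p - q)))) B)"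
        using elim \<open>x \<in> S\<close> by (simp add: zero_less_mult_iff mult_less_0_iff)
    qed
  qed
qed

lemma eventually_local_crossing:
  assumes "0 < m" "m < crossover D K p q" "crossover D K p q < M"
  defines "s \<equiv> \<lambda>B. B powr (- (1 / (2 * p - q)))"
  shows "\<forall>\<^sub>F B in at_top. rescaled.root B * s B \<in> {m * s B..M * s B} \<and>
    sign_changing_crossing (\<lambda>\<epsilon>. Delta \<epsilon> B) (rescaled.root B * s B)"
proof -
  have "\<forall>\<^sub>F B in at_top. m < rescaled.root B \<and> rescaled.root B < M"
    using order_tendstoD[OF rescaled.root_tendsto] assms(2,3) by (auto intro: eventually_conj)
  with eventually_Delta_rescaled[of M] rescaled.eventually_root_sign_changing_crossing
  show ?thesis
  proof eventually_elim
    case (elim B)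
    define c where "c = B powr (- (2 * p / (2 * p - q)))"
    have "0 < s B" "0 < c"
      using elim by (simp_all add: s_def c_def)
    have Delta_eq: "Delta (x * s B) B = c * (leading_profile D K p q x + rescaled_rem R p q B x)"
      if "0 < x" "x \<le> M" for x
      using elim that by (simp add: s_def c_def)
    have "rescaled.root B * s B \<in> {m * s B..M * s B}"
      using elim \<open>0 < s B\<close> by simp
    moreover have "sign_changing_crossing (\<lambda>\<epsilon>. Delta \<epsilon> B) (rescaled.root B * s B)"
    proof (rule sign_changing_crossing_rescale[OF elim(2) _ \<open>0 < c\<close> \<open>0 < s B\<close>])
      show "0 < rescaled.root B" "rescaled.root B * s B < M * s B"
        using elim assms(1) \<open>0 < s B\<close> by simp_all
      show "Delta t B = c * (leading_profile D K p q (t / s B) + rescaled_rem R p q B (t / s B))"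
        if "0 < t" "t < M * s B" for t
        using Delta_eq[of "t / s B"] that \<open>0 < s B\<close> by (simp add: pos_divide_le_eq)
    qed
    ultimately show ?case
      by blast
  qed
qed

lemma eventually_local_crossing_unique:
  assumes "0 < m"
  defines "s \<equiv> \<lambda>B. B powr (- (1 / (2 * p - q)))"
  shows "\<forall>\<^sub>F B in at_top. \<forall>\<epsilon>\<in>{m * s B..M * s B}.
    sign_changing_crossing (\<lambda>t. Delta t B) \<epsilon> \<longrightarrow> \<epsilon> = rescaled.root B * s B"
  using eventually_Delta_rescaled[of M] rescaled.eventually_root_unique[OF assms(1), of M]
proof eventually_elim
  case (elim B)
  define c where "c = B powr (- (2 * p / (2 * p - q)))"
  have "0 < s B" "0 < c"
    using elim by (simp_all add: s_def c_def)
  have Delta_eq: "Delta (x * s B) B = c * (leading_profile D K p q x + rescaled_rem R p q B x)"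
    if "0 < x" "x \<le> M" for x
    using elim that by (simp add: s_def c_def)
  show ?case
  proof (intro ballI impI)
    fix \<epsilon> assume "\<epsilon> \<in> {m * s B..M * s B}" "sign_changing_crossing (\<lambda>t. Delta t B) \<epsilon>"
    then have "\<epsilon> / s B \<in> {m..M}" "Delta (\<epsilon> / s B * s B) B = 0"
      using \<open>0 < s B\<close> by (simp_all add: pos_le_divide_eq pos_divide_le_eq sign_changing_crossing_def)
    then have "c * (leading_profile D K p q (\<epsilon> / s B) + rescaled_rem R p q B (\<epsilon> / s B)) = 0"
      using Delta_eq[of "\<epsilon> / s B"] assms(1) by force
    then have "leading_profile D K p q (\<epsilon> / s B) + rescaled_rem R p q B (\<epsilon> / s B) = 0"
      using \<open>0 < c\<close> by simp
    with \<open>\<epsilon> / s B \<in> {m..M}\<close> have "\<epsilon> / s B = rescaled.root B"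
      using elim(2) by blast
    then show "\<epsilon> = rescaled.root B * s B"
      using \<open>0 < s B\<close> by (simp add: divide_eq_eq)
  qed
qed

lemma eventually_unique_local_crossing:
  assumes "0 < m" "m < crossover D K p q" "crossover D K p q < M"
  defines "s \<equiv> \<lambda>B. B powr (- (1 / (2 * p - q)))"
  shows "\<forall>\<^sub>F B in at_top. rescaled.root B * s B \<in> {m * s B..M * s B} \<and>
    sign_changing_crossing (\<lambda>\<epsilon>. Delta \<epsilon> B) (rescaled.root B * s B) \<and>
    (\<forall>\<epsilon>\<in>{m * s B..M * s B}. sign_changing_crossing (\<lambda>t. Delta t B) \<epsilon> \<longrightarrow> \<epsilon> = rescaled.root B * s B)"
  using eventually_local_crossing[OF assms(1-3)] eventually_local_crossing_unique[OF assms(1), of M]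
  unfolding s_def by eventually_elim blast

lemma local_crossing_ratio_eq:
  "\<forall>\<^sub>F B in at_top. rescaled.root B * B powr (- (1 / (2 * p - q))) /
     (crossover D K p q * B powr (- (1 / (2 * p - q)))) = rescaled.root B / crossover D K p q"
  using eventually_gt_at_top[of 0] by eventually_elim simp

lemma local_crossing_ratio_tendsto:
  "((\<lambda>B. rescaled.root B * B powr (- (1 / (2 * p - q))) /
     (crossover D K p q * B powr (- (1 / (2 * p - q))))) \<longlongrightarrow> 1) at_top"
proof -
  have "((\<lambda>B. rescaled.root B / crossover D K p q) \<longlongrightarrow> crossover D K p q / crossover D K p q) at_top"
    using rescaled.C_pos by (intro tendsto_divide rescaled.root_tendsto tendsto_const) simp
  then have "((\<lambda>B. rescaled.root B / crossover D K p q) \<longlongrightarrow> 1) at_top"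
    using rescaled.C_pos by simp
  then show ?thesis
    using tendsto_cong[OF local_crossing_ratio_eq] by blast
qed

lemma local_crossing_ratio_bigo:
  assumes "\<forall>\<^sub>F B in at_top. \<forall>x\<in>{crossover D K p q / 2..2 * crossover D K p q}.
    \<bar>rescaled_rem R p q B x\<bar> \<le> A * B powr (- \<eta>)"
  shows "(\<lambda>B. rescaled.root B * B powr (- (1 / (2 * p - q))) /
     (crossover D K p q * B powr (- (1 / (2 * p - q)))) - 1) \<in> O[at_top](\<lambda>B. B powr (- \<eta>))"
proof -
  have "(\<lambda>B. rescaled.root B - crossover D K p q) \<in> O[at_top](\<lambda>B. B powr (- \<eta>))"
    using assms by (rule rescaled.root_deviation_bigo)
  then have "(\<lambda>B. (rescaled.root B - crossover D K p q) / crossover D K p q) \<in> O[at_top](\<lambda>B. B powr (- \<eta>))"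
    using rescaled.C_pos by simp
  moreover have "\<forall>\<^sub>F B in at_top. rescaled.root B * B powr (- (1 / (2 * p - q))) /
      (crossover D K p q * B powr (- (1 / (2 * p - q)))) - 1
      = (rescaled.root B - crossover D K p q) / crossover D K p q"
    using local_crossing_ratio_eq by eventually_elim (use rescaled.C_pos in \<open>simp add: diff_divide_distrib\<close>)
  ultimately show ?thesis
    by (simp add: landau_o.big.in_cong)
qed

lemma regime_q_less_2p:
  "let C = (K / D) powr (1 / (2 * p - q)); r = 1 / (2 * p - q) in
     (\<exists>eps_loc :: real \<Rightarrow> real.
        (\<forall>m M. 0 < m \<and> m < C \<and> C < M \<longrightarrow>
           (\<forall>\<^sub>F B in at_top.
              eps_loc B \<in> {m * B powr (- r) .. M * B powr (- r)} \<and>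
              sign_changing_crossing (\<lambda>\<epsilon>. Delta \<epsilon> B) (eps_loc B) \<and>
              (\<forall>\<epsilon>\<in>{m * B powr (- r) .. M * B powr (- r)}.
                 sign_changing_crossing (\<lambda>t. Delta t B) \<epsilon> \<longrightarrow> \<epsilon> = eps_loc B))) \<and>
        ((\<lambda>B. eps_loc B / (C * B powr (- r))) \<longlongrightarrow> 1) at_top \<and>
        (\<forall>\<eta>>0. (\<forall>S. compact S \<and> S \<subseteq> {0<..} \<longrightarrow> (\<exists>A. \<forall>\<^sub>F B in at_top. \<forall>x\<in>S.
                   \<bar>rescaled_rem R p q B x\<bar> \<le> A * B powr (- \<eta>) \<and> \<bar>deta B x\<bar> \<le> A * B powr (- \<eta>)))
               \<longrightarrow> (\<lambda>B. eps_loc B / (C * B powr (- r)) - 1) \<in> O[at_top](\<lambda>B. B powr (- \<eta>)))) \<and>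
     (\<forall>S. compact S \<and> S \<subseteq> {0<..} \<and> C \<notin> S \<longrightarrow>
        (\<forall>\<^sub>F B in at_top. \<forall>x\<in>S.
           (x < C \<longrightarrow> Delta (x * B powr (- r)) B < 0) \<and>
           (x > C \<longrightarrow> Delta (x * B powr (- r)) B > 0)))"
  unfolding Let_def crossover_def [symmetric]
proof (intro conjI exI[of _ "\<lambda>B. rescaled.root B * B powr (- (1 / (2 * p - q)))"])
  let ?C = "crossover D K p q"
  show "\<forall>\<eta>>0. (\<forall>S. compact S \<and> S \<subseteq> {0<..} \<longrightarrow> (\<exists>A. \<forall>\<^sub>F B in at_top. \<forall>x\<in>S.
            \<bar>rescaled_rem R p q B x\<bar> \<le> A * B powr (- \<eta>) \<and> \<bar>deta B x\<bar> \<le> A * B powr (- \<eta>)))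
        \<longrightarrow> (\<lambda>B. rescaled.root B * B powr (- (1 / (2 * p - q))) / (?C * B powr (- (1 / (2 * p - q)))) - 1)
              \<in> O[at_top](\<lambda>B. B powr (- \<eta>))"
  proof (intro allI impI)
    fix \<eta> :: real
    assume rate: "\<forall>S. compact S \<and> S \<subseteq> {0<..} \<longrightarrow> (\<exists>A. \<forall>\<^sub>F B in at_top. \<forall>x\<in>S.
      \<bar>rescaled_rem R p q B x\<bar> \<le> A * B powr (- \<eta>) \<and> \<bar>deta B x\<bar> \<le> A * B powr (- \<eta>))"
    have "compact {?C/2..2*?C} \<and> {?C/2..2*?C} \<subseteq> {0<..}"
      using rescaled.C_pos by auto
    then obtain A where "\<forall>\<^sub>F B in at_top. \<forall>x\<in>{?C/2..2*?C}.
        \<bar>rescaled_rem R p q B x\<bar> \<le> A * B powr (- \<eta>) \<and> \<bar>deta B x\<bar> \<le> A * B powr (- \<eta>)"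
      using rate by blast
    then show "(\<lambda>B. rescaled.root B * B powr (- (1 / (2 * p - q))) / (?C * B powr (- (1 / (2 * p - q)))) - 1)
        \<in> O[at_top](\<lambda>B. B powr (- \<eta>))"
      by (intro local_crossing_ratio_bigo) (auto elim: eventually_mono)
  qed
qed (use eventually_unique_local_crossing local_crossing_ratio_tendsto Delta_sign_rescaled in blast)+

end

context
  fixes Delta R :: "real \<Rightarrow> real \<Rightarrow> real" and D K p q \<delta>b \<delta>v e0 c \<epsilon>1 :: real
  assumes \<delta>b_pos: "0 < \<delta>b" and \<delta>v_pos: "0 < \<delta>v"
    and e0_pos: "0 < e0" and \<epsilon>1_pos: "0 < \<epsilon>1"
    and expansion: "\<And>\<epsilon> B. 0 < \<epsilon> \<Longrightarrow> \<epsilon> < e0 \<Longrightarrow> 0 < B \<Longrightarrow>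
      Delta \<epsilon> B = D * \<epsilon> powr (2 * p) - K * \<epsilon> powr q / B + R \<epsilon> B"
    and rem_bound: "\<And>\<epsilon> B. 0 < \<epsilon> \<Longrightarrow> \<epsilon> < \<epsilon>1 \<Longrightarrow> 0 < B \<Longrightarrow>
      \<bar>R \<epsilon> B\<bar> \<le> c * (\<epsilon> powr (2 * p + \<delta>b) + \<epsilon> powr (q + \<delta>v) / B)"
begin

lemma Delta_minus_leading_smallo:
  assumes "2 * p \<le> q" "0 < B"
  shows "(\<lambda>\<epsilon>. Delta \<epsilon> B - (D * \<epsilon> powr (2 * p) - K * \<epsilon> powr q / B)) \<in> o[at_right 0](\<lambda>\<epsilon>. \<epsilon> powr (2 * p))"
proof -
  have "\<forall>\<^sub>F \<epsilon> in at_right 0. Delta \<epsilon> B - (D * \<epsilon> powr (2 * p) - K * \<epsilon> powr q / B) = R \<epsilon> B"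
    unfolding eventually_at_right_field
    using e0_pos assms(2) by (intro exI[of _ e0]) (simp add: expansion)
  moreover have "(\<lambda>\<epsilon>. R \<epsilon> B) \<in> o[at_right 0](\<lambda>\<epsilon>. \<epsilon> powr (2 * p))"
    using rem_bound[OF _ _ assms(2)] by (rule remainder_smallo[OF assms(1) \<delta>b_pos \<delta>v_pos \<epsilon>1_pos])
  ultimately show ?thesis
    by (simp add: landau_o.small.in_cong)
qed

lemma regime_q_eq_2p:
  assumes "q = 2 * p" "0 < D" "0 < K"
  shows "(\<forall>B>0. (\<lambda>\<epsilon>. Delta \<epsilon> B - (D - K / B) * \<epsilon> powr (2 * p)) \<in> o[at_right 0](\<lambda>\<epsilon>. \<epsilon> powr (2 * p))) \<and>
    (\<forall>B. B > K / D \<longrightarrow> (\<forall>\<^sub>F \<epsilon> in at_right 0. Delta \<epsilon> B > 0)) \<and>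
    (\<forall>B. 0 < B \<and> B < K / D \<longrightarrow> (\<forall>\<^sub>F \<epsilon> in at_right 0. Delta \<epsilon> B < 0))"
proof -
  have smallo: "(\<lambda>\<epsilon>. Delta \<epsilon> B - (D - K / B) * \<epsilon> powr (2 * p)) \<in> o[at_right 0](\<lambda>\<epsilon>. \<epsilon> powr (2 * p))"
    if "0 < B" for B
    using Delta_minus_leading_smallo[OF _ that] assms(1) by (simp add: left_diff_distrib)
  have sgn: "\<forall>\<^sub>F \<epsilon> in at_right 0. sgn (Delta \<epsilon> B) = sgn (D - K / B)" if "0 < B" "D - K / B \<noteq> 0" for B
    using eventually_sgn_eq_of_smallo[OF smallo[OF that(1)] that(2) eventually_pos_powr_at_right_0] .
  have pos: "\<forall>\<^sub>F \<epsilon> in at_right 0. Delta \<epsilon> B > 0" if "K / D < B" for B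
  proof -
    have "0 < B"
      using that assms(2,3) divide_pos_pos[of K D] by linarith
    then have "0 < D - K / B"
      using that assms(2) by (simp add: field_simps)
    with sgn[OF \<open>0 < B\<close>] show ?thesis
      by (auto elim: eventually_mono simp: sgn_1_pos)
  qed
  have neg: "\<forall>\<^sub>F \<epsilon> in at_right 0. Delta \<epsilon> B < 0" if "0 < B" "B < K / D" for B
  proof -
    have "D - K / B < 0"
      using that assms(2) by (simp add: field_simps)
    with sgn[OF that(1)] show ?thesis
      by (auto elim: eventually_mono simp: sgn_1_neg)
  qed
  show ?thesis
    using smallo pos neg by blast
qed

lemma regime_q_greater_2p:
  assumes "2 * p < q" "0 < D"
  shows "\<forall>\<^sub>F B in at_top. \<forall>\<^sub>F \<epsilon> in at_right 0. Delta \<epsilon> B > 0"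
  using eventually_gt_at_top[of 0]
proof eventually_elim
  case (elim B)
  have "(\<lambda>\<epsilon>. Delta \<epsilon> B - (D * \<epsilon> powr (2 * p) - K * \<epsilon> powr q / B)) \<in> o[at_right 0](\<lambda>\<epsilon>. \<epsilon> powr (2 * p))"
    using assms(1) by (intro Delta_minus_leading_smallo elim) simp
  moreover have "(\<lambda>\<epsilon>. K * \<epsilon> powr q / B) \<in> o[at_right 0](\<lambda>\<epsilon>. \<epsilon> powr (2 * p))"
    using powr_smallo_powr_at_right_0[OF assms(1)] by (cases "K = 0"; cases "B = 0") simp_all
  ultimately have "(\<lambda>\<epsilon>. Delta \<epsilon> B - (D * \<epsilon> powr (2 * p) - K * \<epsilon> powr q / B) - K * \<epsilon> powr q / B)
      \<in> o[at_right 0](\<lambda>\<epsilon>. \<epsilon> powr (2 * p))"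
    by (rule sum_in_smallo(2))
  then have "(\<lambda>\<epsilon>. Delta \<epsilon> B - D * \<epsilon> powr (2 * p)) \<in> o[at_right 0](\<lambda>\<epsilon>. \<epsilon> powr (2 * p))"
    by simp
  from eventually_sgn_eq_of_smallo[OF this _ eventually_pos_powr_at_right_0] assms(2)
  show ?case
    by (auto elim: eventually_mono simp: sgn_1_pos)
qed

end

theorem theorem5:
  fixes Delta R :: "real \<Rightarrow> real \<Rightarrow> real"  \<comment> \<open>arguments: noise strength, shot budget\<close>
    and deta :: "real \<Rightarrow> real \<Rightarrow> real"       \<comment> \<open>x-derivative of the rescaled remainder (case (i))\<close>
    and D K p q \<delta>b \<delta>v :: real
  assumes D_pos: "D > 0" and K_pos: "K > 0" and p_ge: "p \<ge> 1" and q_nonneg: "q \<ge> 0"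
    and expansion: "\<exists>\<epsilon>0>0. \<forall>\<epsilon> B. 0 < \<epsilon> \<and> \<epsilon> < \<epsilon>0 \<and> B > 0 \<longrightarrow>
              Delta \<epsilon> B = D * \<epsilon> powr (2 * p) - K * \<epsilon> powr q / B + R \<epsilon> B"
    and \<delta>b_pos: "\<delta>b > 0" and \<delta>v_pos: "\<delta>v > 0"
    and rem_bound: "\<exists>c \<epsilon>1. \<epsilon>1 > 0 \<and> (\<forall>\<epsilon> B. 0 < \<epsilon> \<and> \<epsilon> < \<epsilon>1 \<and> B > 0 \<longrightarrow>
              \<bar>R \<epsilon> B\<bar> \<le> c * (\<epsilon> powr (2 * p + \<delta>b) + \<epsilon> powr (q + \<delta>v) / B))"
  shows
    "(q < 2 * p \<and>
      (\<forall>S. compact S \<and> S \<subseteq> {0<..} \<longrightarrow> (\<forall>e>0. \<forall>\<^sub>F B in at_top. \<forall>x\<in>S.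
          ((rescaled_rem R p q B) has_real_derivative deta B x) (at x) \<and>
          \<bar>rescaled_rem R p q B x\<bar> < e \<and> \<bar>deta B x\<bar> < e))
      \<longrightarrow>
      (let C = (K / D) powr (1 / (2 * p - q)); r = 1 / (2 * p - q) in
       (\<exists>eps_loc :: real \<Rightarrow> real.
          (\<forall>m M. 0 < m \<and> m < C \<and> C < M \<longrightarrow>
             (\<forall>\<^sub>F B in at_top.
                eps_loc B \<in> {m * B powr (- r) .. M * B powr (- r)} \<and>
                sign_changing_crossing (\<lambda>\<epsilon>. Delta \<epsilon> B) (eps_loc B) \<and>
                (\<forall>\<epsilon>\<in>{m * B powr (- r) .. M * B powr (- r)}.
                   sign_changing_crossing (\<lambda>t. Delta t B) \<epsilon> \<longrightarrow> \<epsilon> = eps_loc B))) \<and>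
          ((\<lambda>B. eps_loc B / (C * B powr (- r))) \<longlongrightarrow> 1) at_top \<and>
          (\<forall>\<eta>>0. (\<forall>S. compact S \<and> S \<subseteq> {0<..} \<longrightarrow> (\<exists>A. \<forall>\<^sub>F B in at_top. \<forall>x\<in>S.
                     \<bar>rescaled_rem R p q B x\<bar> \<le> A * B powr (- \<eta>) \<and> \<bar>deta B x\<bar> \<le> A * B powr (- \<eta>)))
                 \<longrightarrow> (\<lambda>B. eps_loc B / (C * B powr (- r)) - 1) \<in> O[at_top](\<lambda>B. B powr (- \<eta>)))) \<and>
       (\<forall>S. compact S \<and> S \<subseteq> {0<..} \<and> C \<notin> S \<longrightarrow>
          (\<forall>\<^sub>F B in at_top. \<forall>x\<in>S.
             (x < C \<longrightarrow> Delta (x * B powr (- r)) B < 0) \<and>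
             (x > C \<longrightarrow> Delta (x * B powr (- r)) B > 0))))) \<and>
     (q = 2 * p \<longrightarrow>
       (\<forall>B>0. (\<lambda>\<epsilon>. Delta \<epsilon> B - (D - K / B) * \<epsilon> powr (2 * p)) \<in> o[at_right 0](\<lambda>\<epsilon>. \<epsilon> powr (2 * p))) \<and>
       (\<forall>B. B > K / D \<longrightarrow> (\<forall>\<^sub>F \<epsilon> in at_right 0. Delta \<epsilon> B > 0)) \<and>
       (\<forall>B. 0 < B \<and> B < K / D \<longrightarrow> (\<forall>\<^sub>F \<epsilon> in at_right 0. Delta \<epsilon> B < 0))) \<and>
     (q > 2 * p \<longrightarrow>
       (\<forall>\<^sub>F B in at_top. \<forall>\<^sub>F \<epsilon> in at_right 0. Delta \<epsilon> B > 0))"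
proof -
  obtain e0 where "0 < e0" and expansion': "\<And>\<epsilon> B. 0 < \<epsilon> \<Longrightarrow> \<epsilon> < e0 \<Longrightarrow> 0 < B \<Longrightarrow>
      Delta \<epsilon> B = D * \<epsilon> powr (2 * p) - K * \<epsilon> powr q / B + R \<epsilon> B"
    using expansion by blast
  obtain c \<epsilon>1 where "0 < \<epsilon>1" and rem_bound': "\<And>\<epsilon> B. 0 < \<epsilon> \<Longrightarrow> \<epsilon> < \<epsilon>1 \<Longrightarrow> 0 < B \<Longrightarrow>
      \<bar>R \<epsilon> B\<bar> \<le> c * (\<epsilon> powr (2 * p + \<delta>b) + \<epsilon> powr (q + \<delta>v) / B)"
    using rem_bound by blast
  note regime_q_less_2p[OF D_pos K_pos _ \<open>0 < e0\<close> expansion']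
  moreover note regime_q_eq_2p[OF \<delta>b_pos \<delta>v_pos \<open>0 < e0\<close> \<open>0 < \<epsilon>1\<close> expansion' rem_bound' _ D_pos K_pos]
  moreover note regime_q_greater_2p[OF \<delta>b_pos \<delta>v_pos \<open>0 < e0\<close> \<open>0 < \<epsilon>1\<close> expansion' rem_bound' _ D_pos]
  ultimately show ?thesis
    by blast
qed

end
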